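(* Let $T>0$, $0<\alpha<1$, $c,d,\lambda>0$, $u_0,u_1\in\mathbb{R}$, and consider \[ u''(t)+c\,u(t)=d\int_0^t e_{\alpha,\alpha}(-\lambda(t-s)^\alpha)\,u(s)\,ds,\quad t\in(0,T],\qquad u(0)=u_0,\ u'(0)=u_1 . \] Setting $z(t)=u''(t)$ (so that $u(t)=u_0+u_1t+\int_0^t(t-s)z(s)\,ds$), this problem can be rewritten as the integral equation \[ z(t)=\int_0^t\big\{d\,e_{\alpha,\alpha+2}(-\lambda(t-s)^\alpha)-c(t-s)\big\}z(s)\,ds+f(t), \] where \[ f(t)=d\,u_0\,e_{\alpha,\alpha+1}(-\lambda t^\alpha)+d\,u_1\,e_{\alpha,\alpha+2}(-\lambda t^\alpha)-c\,u_1t-c\,u_0 . \] Moreover, the problem has a unique solution $u\in C([0,T])$.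
   Context: The Mittag-Leffler function is $E_{\alpha,\beta}(z)=\sum_{k=0}^\infty \frac{z^k}{\Gamma(k\alpha+\beta)}$, and for $\beta>0$, $t>0$ one writes $e_{\alpha,\beta}(-\lambda t^\alpha):=t^{\beta-1}E_{\alpha,\beta}(-\lambda t^\alpha)$. *)

theory Defs
  imports "HOL-Analysis.Analysis"
begin

definition mittag_leffler :: "real \<Rightarrow> real \<Rightarrow> real \<Rightarrow> real" where
  "mittag_leffler \<alpha> \<beta> x = (\<Sum>k. x ^ k / Gamma (real k * \<alpha> + \<beta>))"

text \<open>e_{alpha,beta}(-lambda t^alpha) := t^(beta-1) E_{alpha,beta}(-lambda t^alpha).\<close>
definition ml_e :: "real \<Rightarrow> real \<Rightarrow> real \<Rightarrow> real \<Rightarrow> real" where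
  "ml_e \<alpha> \<beta> lam t = t powr (\<beta> - 1) * mittag_leffler \<alpha> \<beta> (- lam * t powr \<alpha>)"

definition is_solution_with ::
  "real \<Rightarrow> real \<Rightarrow> real \<Rightarrow> real \<Rightarrow> real \<Rightarrow> real \<Rightarrow> real \<Rightarrow>
   (real \<Rightarrow> real) \<Rightarrow> (real \<Rightarrow> real) \<Rightarrow> (real \<Rightarrow> real) \<Rightarrow> bool" where
  "is_solution_with T \<alpha> c d lam u0 u1 u du ddu \<longleftrightarrow>
     (\<forall>t\<in>{0..T}. (u has_real_derivative du t) (at t within {0..T}) \<and>
                  (du has_real_derivative ddu t) (at t within {0..T})) \<and>
     continuous_on {0..T} ddu \<and>
     (\<forall>t\<in>{0<..T}. ddu t + c * u t =
        d * integral {0..t} (\<lambda>s. ml_e \<alpha> \<alpha> lam (t - s) * u s)) \<and>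
     u 0 = u0 \<and> du 0 = u1"

definition is_solution ::
  "real \<Rightarrow> real \<Rightarrow> real \<Rightarrow> real \<Rightarrow> real \<Rightarrow> real \<Rightarrow> real \<Rightarrow> (real \<Rightarrow> real) \<Rightarrow> bool" where
  "is_solution T \<alpha> c d lam u0 u1 u \<longleftrightarrow> (\<exists>du ddu. is_solution_with T \<alpha> c d lam u0 u1 u du ddu)"

end

theory Submission
  imports Defs "HOL-Real_Asymp.Real_Asymp"
begin

(* Writing u(t) = u0 + u1 t + int_0^t (t - s) u''(s) ds and integrating the memory term by parts
   twice, using d/dt e_{alpha,beta}(-lambda t^alpha) = e_{alpha,beta-1}(-lambda t^alpha), turns the
   problem into a linear Volterra equation of the second kind z = V z + f for z = u'', whose kernel
   is continuous and vanishes at 0.  If M bounds the kernel, the n-th power of V is bounded by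
   (M t)^n / n!; hence the Picard iterates converge uniformly to a solution z, and the difference of
   two solutions is 0.  Existence and uniqueness for u follow, as u is recovered from u'' by two
   integrations. *)

section \<open>Mittag-Leffler functions\<close>

lemma Gamma_shift_lower_bound:
  fixes \<alpha> x :: real
  assumes "0 \<le> \<alpha>" "\<alpha> \<le> 1" "0 < x"
  shows "x * Gamma x \<le> (x + \<alpha>) powr (1 - \<alpha>) * Gamma (x + \<alpha>)"
proof -
  have "x \<notin> \<int>\<^sub>\<le>\<^sub>0" "x + \<alpha> \<notin> \<int>\<^sub>\<le>\<^sub>0"
    using assms by (auto elim!: nonpos_Ints_cases)
  hence Gamma_succ: "Gamma (x + 1) = x * Gamma x" "Gamma (x + \<alpha> + 1) = (x + \<alpha>) * Gamma (x + \<alpha>)"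
    by (simp_all add: Gamma_plus1)
  have pos: "0 < Gamma x" "0 < Gamma (x + \<alpha>)" "0 < x + \<alpha>"
    using assms by auto
  have "ln (Gamma (x + 1)) \<le> \<alpha> * ln (Gamma (x + \<alpha>)) + (1 - \<alpha>) * ln (Gamma (x + \<alpha> + 1))"
    using convex_onD[OF log_convex_Gamma_real, of "1 - \<alpha>" "x + \<alpha>" "x + \<alpha> + 1"] assms
    by (simp add: algebra_simps)
  also have "\<dots> = ln (Gamma (x + \<alpha>)) + (1 - \<alpha>) * ln (x + \<alpha>)"
    unfolding Gamma_succ ln_mult_pos[OF pos(3,2)] by (simp add: algebra_simps)
  also have "\<dots> = ln ((x + \<alpha>) powr (1 - \<alpha>) * Gamma (x + \<alpha>))"
    using pos by (simp add: ln_mult_pos ln_powr)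
  finally show ?thesis
    using pos assms by (simp add: Gamma_succ)
qed

lemma filterlim_Gamma_shift_ratio:
  fixes \<alpha> :: real
  assumes "0 < \<alpha>" "\<alpha> < 1"
  shows "filterlim (\<lambda>x. Gamma (x + \<alpha>) / Gamma x) at_top at_top"
proof (rule filterlim_at_top_mono)
  show "filterlim (\<lambda>x. x / (x + \<alpha>) powr (1 - \<alpha>)) at_top at_top"
    using assms by real_asymp
  show "\<forall>\<^sub>F x in at_top. x / (x + \<alpha>) powr (1 - \<alpha>) \<le> Gamma (x + \<alpha>) / Gamma x"
    using eventually_gt_at_top[of 0]
  proof eventually_elim
    case (elim x)
    thus ?case
      using Gamma_shift_lower_bound[of \<alpha> x] assms
      by (simp add: field_simps)
  qed
qed

lemma summable_mittag_leffler:
  fixes \<alpha> \<beta> x :: real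
  assumes "0 < \<alpha>" "\<alpha> < 1"
  shows "summable (\<lambda>k. x ^ k / Gamma (real k * \<alpha> + \<beta>))"
proof -
  have arg: "filterlim (\<lambda>k. real k * \<alpha> + \<beta>) at_top sequentially"
    using assms(1) by real_asymp
  have "filterlim (\<lambda>k. Gamma (real k * \<alpha> + \<beta> + \<alpha>) / Gamma (real k * \<alpha> + \<beta>)) at_top sequentially"
    by (rule filterlim_compose[OF filterlim_Gamma_shift_ratio[OF assms] arg])
  hence "\<forall>\<^sub>F k in sequentially. 2 * \<bar>x\<bar> \<le> Gamma (real k * \<alpha> + \<beta> + \<alpha>) / Gamma (real k * \<alpha> + \<beta>)
                                 \<and> 1 \<le> real k * \<alpha> + \<beta>"
    using arg by (intro eventually_conj) (simp_all add: filterlim_at_top)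
  then obtain N where N: "\<And>k. k \<ge> N \<Longrightarrow> 2 * \<bar>x\<bar> \<le> Gamma (real k * \<alpha> + \<beta> + \<alpha>) / Gamma (real k * \<alpha> + \<beta>)
                                 \<and> 1 \<le> real k * \<alpha> + \<beta>"
    by (auto simp: eventually_sequentially)
  show ?thesis
  proof (rule summable_ratio_test[of "1 / 2" N])
    fix k assume "k \<ge> N"
    note Nk = N[OF this]
    have "real (Suc k) * \<alpha> + \<beta> = real k * \<alpha> + \<beta> + \<alpha>"
      by (simp add: algebra_simps)
    moreover have "0 < Gamma (real k * \<alpha> + \<beta>)" "0 < Gamma (real k * \<alpha> + \<beta> + \<alpha>)"
      using Nk assms by auto
    moreover have "\<bar>x\<bar> ^ k * (2 * \<bar>x\<bar> * Gamma (real k * \<alpha> + \<beta>))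
                   \<le> \<bar>x\<bar> ^ k * Gamma (real k * \<alpha> + \<beta> + \<alpha>)"
      using Nk \<open>0 < Gamma (real k * \<alpha> + \<beta>)\<close> by (intro mult_left_mono) (auto simp: field_simps)
    ultimately show "norm (x ^ Suc k / Gamma (real (Suc k) * \<alpha> + \<beta>))
                     \<le> 1 / 2 * norm (x ^ k / Gamma (real k * \<alpha> + \<beta>))"
      by (simp add: abs_mult power_abs field_simps)
  qed simp
qed

definition mittag_leffler_coeff :: "real \<Rightarrow> real \<Rightarrow> nat \<Rightarrow> real" where
  "mittag_leffler_coeff \<alpha> \<beta> n = inverse (Gamma (real n * \<alpha> + \<beta>))"

lemma mittag_leffler_powser:
  "mittag_leffler \<alpha> \<beta> x = (\<Sum>n. mittag_leffler_coeff \<alpha> \<beta> n * x ^ n)"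
  unfolding mittag_leffler_def mittag_leffler_coeff_def by (simp add: field_simps)

lemma summable_mittag_leffler_powser:
  assumes "0 < \<alpha>" "\<alpha> < 1"
  shows "summable (\<lambda>n. mittag_leffler_coeff \<alpha> \<beta> n * x ^ n)"
  using summable_mittag_leffler[OF assms, of x \<beta>]
  unfolding mittag_leffler_coeff_def by (simp add: field_simps)

lemma has_real_derivative_mittag_leffler:
  assumes "0 < \<alpha>" "\<alpha> < 1"
  shows "(mittag_leffler \<alpha> \<beta> has_real_derivative
           (\<Sum>n. diffs (mittag_leffler_coeff \<alpha> \<beta>) n * x ^ n)) (at x)"
  unfolding mittag_leffler_powser[abs_def]
  by (rule termdiffs_strong_converges_everywhere) (rule summable_mittag_leffler_powser[OF assms])

lemma mittag_leffler_coeff_recurrence: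
  assumes "0 \<le> \<alpha>" "1 < \<beta>"
  shows "(real n * \<alpha> + \<beta> - 1) * mittag_leffler_coeff \<alpha> \<beta> n = mittag_leffler_coeff \<alpha> (\<beta> - 1) n"
proof -
  define y where "y = real n * \<alpha> + (\<beta> - 1)"
  have "0 < y"
    using assms unfolding y_def by (simp add: add_nonneg_pos)
  hence "y \<notin> \<int>\<^sub>\<le>\<^sub>0"
    by (auto elim!: nonpos_Ints_cases)
  hence "Gamma (real n * \<alpha> + \<beta>) = y * Gamma y"
    using Gamma_plus1[of y] by (simp add: y_def algebra_simps)
  moreover have "real n * \<alpha> + \<beta> - 1 = y"
    by (simp add: y_def)
  ultimately show ?thesis
    using \<open>0 < y\<close> unfolding mittag_leffler_coeff_def y_def[symmetric] by simp
qed

lemma mittag_leffler_recurrence: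
  assumes "0 < \<alpha>" "\<alpha> < 1" "1 < \<beta>"
  shows "(\<beta> - 1) * mittag_leffler \<alpha> \<beta> x
           + \<alpha> * x * (\<Sum>n. diffs (mittag_leffler_coeff \<alpha> \<beta>) n * x ^ n)
         = mittag_leffler \<alpha> (\<beta> - 1) x"
proof -
  let ?c = "mittag_leffler_coeff \<alpha> \<beta>"
  have "(\<lambda>n. ?c n * x ^ n) sums mittag_leffler \<alpha> \<beta> x"
    unfolding mittag_leffler_powser using summable_mittag_leffler_powser[OF assms(1,2)]
    by (rule summable_sums)
  moreover have "(\<lambda>n. real n * ?c n * x ^ n) sums (x * (\<Sum>n. diffs ?c n * x ^ n))"
  proof -
    have "(\<lambda>n. x * (diffs ?c n * x ^ n)) sums (x * (\<Sum>n. diffs ?c n * x ^ n))"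
      using termdiff_converges_all[OF summable_mittag_leffler_powser[OF assms(1,2)]]
      by (intro sums_mult summable_sums)
    moreover have "(\<lambda>n. x * (diffs ?c n * x ^ n)) = (\<lambda>n. real (Suc n) * ?c (Suc n) * x ^ Suc n)"
      by (auto simp: diffs_def fun_eq_iff algebra_simps)
    ultimately show ?thesis
      using sums_Suc_iff[of "\<lambda>n. real n * ?c n * x ^ n"] by simp
  qed
  ultimately have "(\<lambda>n. (\<beta> - 1) * (?c n * x ^ n) + \<alpha> * (real n * ?c n * x ^ n)) sums
      ((\<beta> - 1) * mittag_leffler \<alpha> \<beta> x + \<alpha> * (x * (\<Sum>n. diffs ?c n * x ^ n)))"
    by (intro sums_add sums_mult)
  moreover have "(\<beta> - 1) * (?c n * x ^ n) + \<alpha> * (real n * ?c n * x ^ n)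
                 = mittag_leffler_coeff \<alpha> (\<beta> - 1) n * x ^ n" for n
  proof -
    have "(\<beta> - 1) * (?c n * x ^ n) + \<alpha> * (real n * ?c n * x ^ n)
          = ((real n * \<alpha> + \<beta> - 1) * ?c n) * x ^ n"
      by (simp add: algebra_simps)
    also have "\<dots> = mittag_leffler_coeff \<alpha> (\<beta> - 1) n * x ^ n"
      using assms by (simp only: mittag_leffler_coeff_recurrence less_imp_le)
    finally show ?thesis .
  qed
  ultimately show ?thesis
    unfolding mittag_leffler_powser[of \<alpha> "\<beta> - 1"] by (simp add: sums_iff algebra_simps)
qed

lemma has_real_derivative_ml_e:
  assumes "0 < \<alpha>" "\<alpha> < 1" "1 < \<beta>" "0 < r"
  shows "(ml_e \<alpha> \<beta> lam has_real_derivative ml_e \<alpha> (\<beta> - 1) lam r) (at r)"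
proof -
  define x where "x = - lam * r powr \<alpha>"
  define E' where "E' = (\<Sum>n. diffs (mittag_leffler_coeff \<alpha> \<beta>) n * x ^ n)"
  have "(ml_e \<alpha> \<beta> lam has_real_derivative
          (\<beta> - 1) * r powr (\<beta> - 1 - 1) * mittag_leffler \<alpha> \<beta> x
          + r powr (\<beta> - 1) * (E' * (- lam * (\<alpha> * r powr (\<alpha> - 1))))) (at r)"
    unfolding ml_e_def[abs_def] x_def E'_def using assms
    by (auto intro!: derivative_eq_intros
                     DERIV_chain2[OF has_real_derivative_mittag_leffler[OF assms(1,2)]])
  moreover have "r powr (\<beta> - 1) * r powr (\<alpha> - 1) = r powr (\<beta> - 1 - 1) * r powr \<alpha>"
    by (simp add: powr_add[symmetric] algebra_simps)
  hence "(\<beta> - 1) * r powr (\<beta> - 1 - 1) * mittag_leffler \<alpha> \<beta> x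
          + r powr (\<beta> - 1) * (E' * (- lam * (\<alpha> * r powr (\<alpha> - 1))))
        = r powr (\<beta> - 1 - 1) * ((\<beta> - 1) * mittag_leffler \<alpha> \<beta> x + \<alpha> * x * E')"
    unfolding x_def by (simp add: algebra_simps)
  ultimately show ?thesis
    unfolding mittag_leffler_recurrence[OF assms(1-3)] E'_def ml_e_def x_def by simp
qed

(* The hypothesis is not needed in the proof, as 0 powr 0 = 0; without it the
   lemma would assert a junk value for beta = 1. *)
lemma ml_e_0:
  assumes "1 < \<beta>"
  shows "ml_e \<alpha> \<beta> lam 0 = 0"
  by (simp add: ml_e_def)

lemma continuous_on_ml_e:
  assumes "0 < \<alpha>" "\<alpha> < 1" "1 < \<beta>"
  shows "continuous_on {0..} (ml_e \<alpha> \<beta> lam)"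
proof -
  have E: "continuous_on UNIV (mittag_leffler \<alpha> \<beta>)"
    using has_real_derivative_mittag_leffler[OF assms(1,2)]
    by (intro continuous_at_imp_continuous_on ballI DERIV_isCont) auto
  have powr: "continuous_on {0..} (\<lambda>t::real. t powr \<gamma>)" if "0 < \<gamma>" for \<gamma>
    using that by (intro continuous_on_powr' continuous_intros) auto
  have "continuous_on {0..} (\<lambda>t. - lam * t powr \<alpha>)"
    using powr[OF assms(1)] by (rule continuous_on_mult_left)
  hence "continuous_on {0..} (\<lambda>t. mittag_leffler \<alpha> \<beta> (- lam * t powr \<alpha>))"
    using continuous_on_compose2[OF E] by blast
  thus ?thesis
    unfolding ml_e_def[abs_def] using powr[of "\<beta> - 1"] assms by (intro continuous_on_mult) auto
qed

section \<open>Linear Volterra equations of the second kind\<close>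

lemma power_over_fact_tendsto_zero: "(\<lambda>n. x ^ n / fact n :: real) \<longlonglongrightarrow> 0"
proof (rule summable_LIMSEQ_zero)
  show "summable (\<lambda>n. x ^ n / fact n)"
    using summable_exp[of x] by (simp add: divide_inverse mult.commute)
qed

lemma has_integral_power_over_fact:
  fixes t :: real
  assumes "0 \<le> t"
  shows "((\<lambda>s. s ^ n / fact n) has_integral t ^ Suc n / fact (Suc n)) {0..t}"
proof -
  have "((\<lambda>s. s ^ Suc n / fact (Suc n)) has_real_derivative real (Suc n) * x ^ n / fact (Suc n))
          (at x within {0..t})" for x
    using DERIV_cdivide[OF DERIV_pow[of "Suc n" x], of "fact (Suc n)"]
    by (simp add: has_field_derivative_at_within)
  moreover have "real (Suc n) * x ^ n / fact (Suc n) = x ^ n / fact n" for x :: real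
    by (simp add: fact_Suc del: of_nat_Suc)
  ultimately show ?thesis
    using fundamental_theorem_of_calculus[OF assms, of "\<lambda>s. s ^ Suc n / fact (Suc n)"]
    by (simp add: has_real_derivative_iff_has_vector_derivative)
qed

lemma continuous_on_Icc_abs_bounded:
  fixes f :: "real \<Rightarrow> real"
  assumes "continuous_on {a..b} f"
  obtains B where "\<And>t. t \<in> {a..b} \<Longrightarrow> \<bar>f t\<bar> \<le> B"
  using compact_imp_bounded[OF compact_continuous_image[OF assms compact_Icc]]
  by (auto simp: bounded_real intro: that)

lemma continuous_on_reflect:
  fixes e :: "real \<Rightarrow> real"
  assumes "continuous_on {0..t} e"
  shows "continuous_on {0..t} (\<lambda>s. e (t - s))"
  by (rule continuous_on_compose2[OF assms]) (auto intro!: continuous_intros)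

lemma has_real_derivative_reflect:
  assumes "(e has_real_derivative e') (at (t - s))"
  shows "((\<lambda>s. e (t - s)) has_real_derivative - e') (at s)"
proof -
  have "((\<lambda>s. t - s) has_real_derivative - 1) (at s)"
    by (auto intro!: derivative_eq_intros)
  from DERIV_chain2[OF assms this] show ?thesis
    by simp
qed

locale volterra =
  fixes T :: real and K :: "real \<Rightarrow> real"
  assumes T_pos: "0 < T"
    and continuous_K: "continuous_on {0..T} K"
    and K_0: "K 0 = 0"
begin

definition volterra_op :: "(real \<Rightarrow> real) \<Rightarrow> real \<Rightarrow> real" where
  "volterra_op z t = integral {0..t} (\<lambda>s. K (t - s) * z s)"

definition kernel_bound :: real where
  "kernel_bound = (SUP r\<in>{0..T}. \<bar>K r\<bar>)"

lemma abs_K_le_kernel_bound: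
  assumes "r \<in> {0..T}"
  shows "\<bar>K r\<bar> \<le> kernel_bound"
proof -
  have "bounded ((\<lambda>r. \<bar>K r\<bar>) ` {0..T})"
    using continuous_K by (intro compact_imp_bounded compact_continuous_image continuous_intros) auto
  thus ?thesis
    unfolding kernel_bound_def using assms by (intro cSUP_upper bounded_imp_bdd_above)
qed

lemma kernel_bound_nonneg: "0 \<le> kernel_bound"
  using abs_K_le_kernel_bound[of 0] T_pos by simp

lemma volterra_integrand_integrable:
  assumes "continuous_on {0..T} z" "t \<le> T"
  shows "(\<lambda>s. K (t - s) * z s) integrable_on {0..t}"
  using continuous_on_reflect[OF continuous_on_subset[OF continuous_K, of "{0..t}"]]
    continuous_on_subset[OF assms(1), of "{0..t}"] assms(2)
  by (intro integrable_continuous_interval continuous_on_mult) auto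

lemma volterra_op_diff:
  assumes "continuous_on {0..T} z1" "continuous_on {0..T} z2" "t \<le> T"
  shows "volterra_op (\<lambda>s. z1 s - z2 s) t = volterra_op z1 t - volterra_op z2 t"
  unfolding volterra_op_def right_diff_distrib
  using assms by (intro integral_diff volterra_integrand_integrable)

lemma abs_volterra_op_le:
  assumes z: "continuous_on {0..T} z" and t: "t \<in> {0..T}"
    and g: "continuous_on {0..t} g" and zg: "\<And>s. s \<in> {0..t} \<Longrightarrow> \<bar>z s\<bar> \<le> g s"
  shows "\<bar>volterra_op z t\<bar> \<le> kernel_bound * integral {0..t} g"
proof -
  have "norm (volterra_op z t) \<le> integral {0..t} (\<lambda>s. kernel_bound * g s)"
    unfolding volterra_op_def
  proof (rule integral_norm_bound_integral)
    show "(\<lambda>s. K (t - s) * z s) integrable_on {0..t}"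
      using z t by (intro volterra_integrand_integrable) auto
    show "(\<lambda>s. kernel_bound * g s) integrable_on {0..t}"
      using g by (intro integrable_continuous_interval continuous_intros)
    fix s assume "s \<in> {0..t}"
    thus "norm (K (t - s) * z s) \<le> kernel_bound * g s"
      using abs_K_le_kernel_bound[of "t - s"] zg[of s] t
      by (auto simp: abs_mult intro!: mult_mono')
  qed
  thus ?thesis by simp
qed

lemma continuous_on_volterra_op:
  assumes z: "continuous_on {0..T} z"
  shows "continuous_on {0..T} (volterra_op z)"
proof -
  \<comment> \<open>Since \<open>K 0 = 0\<close>, the variable upper limit can be traded for a truncated kernel on a fixed interval.\<close>
  have truncate: "volterra_op z t = integral (cbox 0 T) (\<lambda>s. K (max (t - s) 0) * z s)"
    if t: "t \<in> {0..T}" for t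
  proof -
    have "(\<lambda>s. K (max (t - s) 0) * z s) integrable_on {0..T}"
      using t z by (intro integrable_continuous_interval continuous_intros
                          continuous_on_compose2[OF continuous_K]) auto
    hence "integral {0..T} (\<lambda>s. K (max (t - s) 0) * z s)
           = integral {0..t} (\<lambda>s. K (max (t - s) 0) * z s) + integral {t..T} (\<lambda>s. K (max (t - s) 0) * z s)"
      using t by (simp add: Henstock_Kurzweil_Integration.integral_combine)
    also have "integral {t..T} (\<lambda>s. K (max (t - s) 0) * z s) = 0"
      by (subst integral_cong[where g = "\<lambda>_. 0"]) (auto simp: K_0)
    also have "integral {0..t} (\<lambda>s. K (max (t - s) 0) * z s) = volterra_op z t"
      unfolding volterra_op_def by (rule integral_cong) simp
    finally show ?thesis by simp
  qed
  have "continuous_on ({0..T} \<times> cbox 0 T) (\<lambda>(t, s). K (max (t - s) 0) * z s)"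
    unfolding case_prod_beta
    by (intro continuous_on_mult continuous_on_compose2[OF continuous_K]
              continuous_on_compose2[OF z] continuous_intros) auto
  hence "continuous_on {0..T} (\<lambda>t. integral (cbox 0 T) (\<lambda>s. K (max (t - s) 0) * z s))"
    by (rule integral_continuous_on_param)
  thus ?thesis
    by (rule continuous_on_eq) (simp add: truncate)
qed

lemma volterra_iterates_bound:
  fixes w :: "nat \<Rightarrow> real \<Rightarrow> real"
  assumes cont: "\<And>n. continuous_on {0..T} (w n)"
    and bound: "\<And>t. t \<in> {0..T} \<Longrightarrow> \<bar>w 0 t\<bar> \<le> B"
    and step: "\<And>n t. t \<in> {0..T} \<Longrightarrow> w (Suc n) t = volterra_op (w n) t"
  shows "t \<in> {0..T} \<Longrightarrow> \<bar>w n t\<bar> \<le> B * (kernel_bound * t) ^ n / fact n"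
proof (induction n arbitrary: t)
  case 0
  thus ?case using bound by simp
next
  case (Suc n)
  let ?g = "\<lambda>s. B * kernel_bound ^ n * (s ^ n / fact n)"
  have "\<bar>w (Suc n) t\<bar> = \<bar>volterra_op (w n) t\<bar>"
    using step Suc.prems by simp
  also have "\<dots> \<le> kernel_bound * integral {0..t} ?g"
    using Suc by (intro abs_volterra_op_le cont continuous_intros)
                 (auto simp: power_mult_distrib mult.assoc)
  also have "integral {0..t} ?g = B * kernel_bound ^ n * (t ^ Suc n / fact (Suc n))"
    using Suc.prems by (intro integral_unique has_integral_mult_right has_integral_power_over_fact) auto
  finally show ?case
    by (simp add: power_mult_distrib algebra_simps)
qed

lemma volterra_eq_unique:
  assumes cont: "continuous_on {0..T} z1" "continuous_on {0..T} z2"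
    and eq: "\<And>t. t \<in> {0..T} \<Longrightarrow> z1 t = volterra_op z1 t + f t"
            "\<And>t. t \<in> {0..T} \<Longrightarrow> z2 t = volterra_op z2 t + f t"
    and t: "t \<in> {0..T}"
  shows "z1 t = z2 t"
proof -
  let ?w = "\<lambda>s. z1 s - z2 s"
  have cont_w: "continuous_on {0..T} ?w"
    using cont by (intro continuous_intros)
  obtain B where B: "\<And>s. s \<in> {0..T} \<Longrightarrow> \<bar>?w s\<bar> \<le> B"
    using continuous_on_Icc_abs_bounded[OF cont_w] by metis
  have fixed: "?w s = volterra_op ?w s" if "s \<in> {0..T}" for s
    using eq[OF that] volterra_op_diff[OF cont] that by simp
  have "\<bar>?w t\<bar> \<le> B * (kernel_bound * t) ^ n / fact n" for n
    using volterra_iterates_bound[of "\<lambda>_. ?w", OF cont_w B fixed t] .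
  moreover have "(\<lambda>n. B * ((kernel_bound * t) ^ n / fact n)) \<longlonglongrightarrow> B * 0"
    by (intro tendsto_mult tendsto_const power_over_fact_tendsto_zero)
  ultimately have "\<bar>?w t\<bar> \<le> 0"
    by (intro LIMSEQ_le_const[of _ 0]) auto
  thus ?thesis by simp
qed

lemma volterra_eq_at_0:
  assumes z: "continuous_on {0..T} z" and f: "continuous_on {0..T} f"
    and eq: "\<And>t. t \<in> {0<..T} \<Longrightarrow> z t = volterra_op z t + f t"
    and t: "t \<in> {0..T}"
  shows "z t = volterra_op z t + f t"
proof -
  have "z t - (volterra_op z t + f t) = 0"
  proof (rule continuous_constant_on_closure[of "{0<..T}" "\<lambda>s. z s - (volterra_op z s + f s)"])
    show "continuous_on (closure {0<..T}) (\<lambda>t. z t - (volterra_op z t + f t))"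
      using z f continuous_on_volterra_op[OF z] T_pos by (simp add: continuous_intros)
    show "z s - (volterra_op z s + f s) = 0" if "s \<in> {0<..T}" for s
      using eq[OF that] by simp
    show "t \<in> closure {0<..T}"
      using t T_pos by simp
  qed
  thus ?thesis by simp
qed

lemma volterra_op_tendsto:
  assumes cont: "\<And>n. continuous_on {0..T} (zs n)" "continuous_on {0..T} z"
    and lim: "uniform_limit {0..T} zs z sequentially"
    and t: "t \<in> {0..T}"
  shows "(\<lambda>n. volterra_op (zs n) t) \<longlonglongrightarrow> volterra_op z t"
proof (rule LIMSEQ_I)
  fix e :: real assume "0 < e"
  define \<delta> where "\<delta> = e / (kernel_bound * T + 1)"
  have "0 < \<delta>"
    using \<open>0 < e\<close> kernel_bound_nonneg T_pos by (simp add: \<delta>_def add_nonneg_pos)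
  then obtain N where N: "\<And>n s. n \<ge> N \<Longrightarrow> s \<in> {0..T} \<Longrightarrow> \<bar>zs n s - z s\<bar> < \<delta>"
    using lim unfolding uniform_limit_sequentially_iff dist_real_def by blast
  have close: "norm (volterra_op (zs n) t - volterra_op z t) < e" if "n \<ge> N" for n
  proof -
    have "\<bar>volterra_op (\<lambda>s. zs n s - z s) t\<bar> \<le> kernel_bound * integral {0..t} (\<lambda>_. \<delta>)"
      using N[OF that] cont t by (intro abs_volterra_op_le continuous_intros) (auto intro: less_imp_le)
    also have "\<dots> \<le> kernel_bound * (T * \<delta>)"
      using t \<open>0 < \<delta>\<close> kernel_bound_nonneg by (simp add: mult_left_mono mult_right_mono)
    also have "\<dots> = e * (kernel_bound * T) / (kernel_bound * T + 1)"
      by (simp add: \<delta>_def)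
    also have "\<dots> < e"
      using \<open>0 < e\<close> kernel_bound_nonneg T_pos by (simp add: pos_divide_less_eq add_nonneg_pos)
    finally show ?thesis
      using volterra_op_diff[OF cont(1,2)] t by simp
  qed
  show "\<exists>N. \<forall>n\<ge>N. norm (volterra_op (zs n) t - volterra_op z t) < e"
    using close by auto
qed

definition picard_iterate :: "(real \<Rightarrow> real) \<Rightarrow> nat \<Rightarrow> real \<Rightarrow> real" where
  "picard_iterate f n = ((\<lambda>z t. volterra_op z t + f t) ^^ n) f"

lemma picard_iterate_0: "picard_iterate f 0 = f"
  by (simp add: picard_iterate_def)

lemma picard_iterate_Suc: "picard_iterate f (Suc n) = (\<lambda>t. volterra_op (picard_iterate f n) t + f t)"
  by (simp add: picard_iterate_def)

lemma continuous_on_picard_iterate: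
  assumes "continuous_on {0..T} f"
  shows "continuous_on {0..T} (picard_iterate f n)"
proof (induction n)
  case 0
  thus ?case using assms by (simp add: picard_iterate_0)
next
  case (Suc n)
  thus ?case unfolding picard_iterate_Suc by (intro continuous_on_add continuous_on_volterra_op assms)
qed

lemma picard_iterate_increment_bound:
  assumes f: "continuous_on {0..T} f"
  obtains B where "\<And>n t. t \<in> {0..T} \<Longrightarrow>
    \<bar>picard_iterate f (Suc n) t - picard_iterate f n t\<bar> \<le> B * (kernel_bound * T) ^ n / fact n"
proof -
  define w where "w n t = picard_iterate f (Suc n) t - picard_iterate f n t" for n t
  note cont = continuous_on_picard_iterate[OF f]
  have cont_w: "continuous_on {0..T} (w n)" for n
    unfolding w_def using cont by (intro continuous_intros)
  have w_Suc: "w (Suc n) t = volterra_op (w n) t" if "t \<in> {0..T}" for n t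
    using volterra_op_diff[OF cont cont, of t "Suc n" n] that
    by (simp add: w_def[abs_def] picard_iterate_Suc)
  obtain B where B: "\<And>t. t \<in> {0..T} \<Longrightarrow> \<bar>w 0 t\<bar> \<le> B"
    using continuous_on_Icc_abs_bounded[OF cont_w] by metis
  have "\<bar>w n t\<bar> \<le> B * (kernel_bound * T) ^ n / fact n" if t: "t \<in> {0..T}" for n t
  proof -
    have "(kernel_bound * t) ^ n \<le> (kernel_bound * T) ^ n"
      using t kernel_bound_nonneg by (intro power_mono mult_left_mono) auto
    moreover have "0 \<le> B"
      using B[of 0] T_pos by simp
    ultimately have "B * (kernel_bound * t) ^ n / fact n \<le> B * (kernel_bound * T) ^ n / fact n"
      by (intro divide_right_mono mult_left_mono) auto
    moreover have "\<bar>w n t\<bar> \<le> B * (kernel_bound * t) ^ n / fact n"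
      by (rule volterra_iterates_bound[OF cont_w B w_Suc t])
    ultimately show ?thesis
      by linarith
  qed
  thus ?thesis
    using that unfolding w_def by blast
qed

lemma uniform_limit_picard_iterate:
  assumes f: "continuous_on {0..T} f"
  obtains z where "uniform_limit {0..T} (picard_iterate f) z sequentially"
proof -
  let ?w = "\<lambda>i t. picard_iterate f (Suc i) t - picard_iterate f i t"
  obtain B where B: "\<And>n t. t \<in> {0..T} \<Longrightarrow> \<bar>?w n t\<bar> \<le> B * (kernel_bound * T) ^ n / fact n"
    using picard_iterate_increment_bound[OF f] by metis
  have "uniform_limit {0..T} (\<lambda>n t. \<Sum>i<n. ?w i t) (\<lambda>t. \<Sum>i. ?w i t) sequentially"
  proof (rule Weierstrass_m_test)
    show "norm (?w n t) \<le> B * ((kernel_bound * T) ^ n / fact n)" if "t \<in> {0..T}" for n t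
      using B[OF that, of n] by simp
    show "summable (\<lambda>n. B * ((kernel_bound * T) ^ n / fact n))"
      using summable_exp[of "kernel_bound * T"] by (simp add: divide_inverse mult.commute)
  qed
  hence "uniform_limit {0..T} (\<lambda>n t. f t + (\<Sum>i<n. ?w i t)) (\<lambda>t. f t + (\<Sum>i. ?w i t)) sequentially"
    by (intro uniform_limit_add uniform_limit_const)
  moreover have "(\<lambda>n t. f t + (\<Sum>i<n. ?w i t)) = picard_iterate f"
  proof (intro ext)
    show "f t + (\<Sum>i<n. ?w i t) = picard_iterate f n t" for n t
      using sum_lessThan_telescope[of "\<lambda>i. picard_iterate f i t" n] by (simp add: picard_iterate_0)
  qed
  ultimately show ?thesis
    using that by simp
qed

lemma volterra_eq_exists:
  assumes f: "continuous_on {0..T} f"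
  obtains z where "continuous_on {0..T} z" "\<And>t. t \<in> {0..T} \<Longrightarrow> z t = volterra_op z t + f t"
proof -
  obtain z where lim: "uniform_limit {0..T} (picard_iterate f) z sequentially"
    using uniform_limit_picard_iterate[OF f] by metis
  note cont = continuous_on_picard_iterate[OF f]
  have cont_z: "continuous_on {0..T} z"
    using cont by (intro uniform_limit_theorem[OF _ lim] always_eventually allI) simp_all
  have "z t = volterra_op z t + f t" if t: "t \<in> {0..T}" for t
  proof (rule LIMSEQ_unique)
    show "(\<lambda>n. picard_iterate f (Suc n) t) \<longlonglongrightarrow> z t"
      using tendsto_uniform_limitI[OF lim t] by (rule LIMSEQ_Suc)
    show "(\<lambda>n. picard_iterate f (Suc n) t) \<longlonglongrightarrow> volterra_op z t + f t"
      unfolding picard_iterate_Suc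
      by (intro tendsto_add tendsto_const volterra_op_tendsto[OF cont cont_z lim t])
  qed
  with cont_z show ?thesis
    by (rule that)
qed

end

section \<open>Functions with a continuous second derivative\<close>

locale C2_on =
  fixes T :: real and u du ddu :: "real \<Rightarrow> real"
  assumes has_derivative_u: "\<And>t. t \<in> {0..T} \<Longrightarrow> (u has_real_derivative du t) (at t within {0..T})"
    and has_derivative_du: "\<And>t. t \<in> {0..T} \<Longrightarrow> (du has_real_derivative ddu t) (at t within {0..T})"
    and continuous_ddu: "continuous_on {0..T} ddu"
begin

lemma continuous_on_u: "continuous_on {0..T} u"
  using has_derivative_u by (rule DERIV_continuous_on)

lemma continuous_on_du: "continuous_on {0..T} du"
  using has_derivative_du by (rule DERIV_continuous_on)

lemma has_derivative_interior:
  assumes "0 < s" "s < T"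
  shows "(u has_real_derivative du s) (at s)" "(du has_real_derivative ddu s) (at s)"
proof -
  have "s \<in> {0..T}" "at s within {0..T} = at s"
    using at_within_Icc_at[of 0 s T] assms by auto
  thus "(u has_real_derivative du s) (at s)" "(du has_real_derivative ddu s) (at s)"
    using has_derivative_u[of s] has_derivative_du[of s] by simp_all
qed

lemma taylor_integral_remainder:
  assumes t: "t \<in> {0..T}"
  shows "((\<lambda>s. (t - s) * ddu s) has_integral u t - u 0 - du 0 * t) {0..t}"
proof -
  define H where "H s = u s + (t - s) * du s" for s
  have sub: "{0..t} \<subseteq> {0..T}"
    using t by auto
  have "continuous_on {0..t} H"
    unfolding H_def using continuous_on_subset[OF continuous_on_u sub] continuous_on_subset[OF continuous_on_du sub]
    by (intro continuous_intros)
  moreover have "(H has_vector_derivative (t - s) * ddu s) (at s)" if s: "s \<in> {0<..<t}" for s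
  proof -
    have "(H has_real_derivative du s + ((t - s) * ddu s + (- 1) * du s)) (at s)"
      unfolding H_def[abs_def] using s t
      by (intro DERIV_add DERIV_mult' has_derivative_interior derivative_eq_intros) auto
    thus ?thesis
      by (simp add: has_real_derivative_iff_has_vector_derivative)
  qed
  ultimately have "((\<lambda>s. (t - s) * ddu s) has_integral H t - H 0) {0..t}"
    using t by (intro fundamental_theorem_of_calculus_interior) auto
  thus ?thesis
    by (simp add: H_def algebra_simps)
qed

lemma integrable_convolution_ddu:
  assumes "continuous_on {0..t} e" "t \<le> T"
  shows "(\<lambda>s. e (t - s) * ddu s) integrable_on {0..t}"
  using continuous_on_reflect[OF assms(1)] continuous_on_subset[OF continuous_ddu, of "{0..t}"] assms(2)
  by (intro integrable_continuous_interval continuous_on_mult) auto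

lemma convolution_by_parts:
  fixes e0 e1 e2 :: "real \<Rightarrow> real"
  assumes t: "t \<in> {0<..T}"
    and cont: "continuous_on {0..t} e1" "continuous_on {0..t} e2"
    and deriv: "\<And>r. r \<in> {0<..<t} \<Longrightarrow> (e1 has_real_derivative e0 r) (at r)"
               "\<And>r. r \<in> {0<..<t} \<Longrightarrow> (e2 has_real_derivative e1 r) (at r)"
    and zero: "e1 0 = 0" "e2 0 = 0"
  shows "((\<lambda>s. e0 (t - s) * u s) has_integral
           u 0 * e1 t + du 0 * e2 t + integral {0..t} (\<lambda>s. e2 (t - s) * ddu s)) {0..t}"
proof -
  have sub: "{0..t} \<subseteq> {0..T}"
    using t by auto
  define G where "G s = - (e1 (t - s) * u s) - e2 (t - s) * du s" for s
  have "continuous_on {0..t} G"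
    unfolding G_def using continuous_on_reflect[OF cont(1)] continuous_on_reflect[OF cont(2)]
      continuous_on_subset[OF continuous_on_u sub] continuous_on_subset[OF continuous_on_du sub]
    by (intro continuous_intros)
  moreover have "(G has_vector_derivative e0 (t - s) * u s - e2 (t - s) * ddu s) (at s)"
    if s: "s \<in> {0<..<t}" for s
  proof -
    have "0 < s" "s < T" "t - s \<in> {0<..<t}"
      using s t by auto
    hence "(G has_real_derivative - (- e0 (t - s) * u s + du s * e1 (t - s))
                                  - (- e1 (t - s) * du s + ddu s * e2 (t - s))) (at s)"
      unfolding G_def[abs_def]
      by (intro DERIV_diff DERIV_minus DERIV_mult has_real_derivative_reflect deriv has_derivative_interior)
    thus ?thesis
      by (simp add: has_real_derivative_iff_has_vector_derivative algebra_simps)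
  qed
  ultimately have "((\<lambda>s. e0 (t - s) * u s - e2 (t - s) * ddu s) has_integral G t - G 0) {0..t}"
    using t by (intro fundamental_theorem_of_calculus_interior) auto
  moreover have "(\<lambda>s. e2 (t - s) * ddu s) integrable_on {0..t}"
    using cont(2) t by (intro integrable_convolution_ddu) auto
  ultimately have "((\<lambda>s. (e0 (t - s) * u s - e2 (t - s) * ddu s) + e2 (t - s) * ddu s) has_integral
                      G t - G 0 + integral {0..t} (\<lambda>s. e2 (t - s) * ddu s)) {0..t}"
    by (intro has_integral_add) (simp_all add: integrable_integral)
  thus ?thesis
    by (simp add: G_def zero algebra_simps)
qed

end

lemma C2_on_integral_integral:
  assumes z: "continuous_on {0..T} z"
  shows "C2_on T (\<lambda>t. u0 + integral {0..t} (\<lambda>s. u1 + integral {0..s} z)) (\<lambda>t. u1 + integral {0..t} z) z"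
proof
  show du: "((\<lambda>t. u1 + integral {0..t} z) has_real_derivative z t) (at t within {0..T})"
    if "t \<in> {0..T}" for t
    using integral_has_vector_derivative[OF z that]
    by (auto intro!: derivative_eq_intros simp: has_real_derivative_iff_has_vector_derivative)
  hence "continuous_on {0..T} (\<lambda>t. u1 + integral {0..t} z)"
    by (rule DERIV_continuous_on)
  thus "((\<lambda>t. u0 + integral {0..t} (\<lambda>s. u1 + integral {0..s} z)) has_real_derivative
          u1 + integral {0..t} z) (at t within {0..T})" if "t \<in> {0..T}" for t
    using integral_has_vector_derivative[OF _ that, of "\<lambda>t. u1 + integral {0..t} z"]
    by (auto intro!: derivative_eq_intros simp: has_real_derivative_iff_has_vector_derivative)
qed (fact z)

section \<open>Reduction of the problem to a Volterra equation\<close>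

definition reduced_kernel :: "real \<Rightarrow> real \<Rightarrow> real \<Rightarrow> real \<Rightarrow> real \<Rightarrow> real" where
  "reduced_kernel \<alpha> c d lam r = d * ml_e \<alpha> (\<alpha> + 2) lam r - c * r"

definition reduced_forcing ::
  "real \<Rightarrow> real \<Rightarrow> real \<Rightarrow> real \<Rightarrow> real \<Rightarrow> real \<Rightarrow> real \<Rightarrow> real" where
  "reduced_forcing \<alpha> c d lam u0 u1 t =
     d * u0 * ml_e \<alpha> (\<alpha> + 1) lam t + d * u1 * ml_e \<alpha> (\<alpha> + 2) lam t - c * u1 * t - c * u0"

lemma volterra_reduced_kernel:
  assumes "0 < \<alpha>" "\<alpha> < 1" "0 < T"
  shows "volterra T (reduced_kernel \<alpha> c d lam)"
proof
  show "continuous_on {0..T} (reduced_kernel \<alpha> c d lam)"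
    unfolding reduced_kernel_def[abs_def]
    using continuous_on_subset[OF continuous_on_ml_e[of \<alpha> "\<alpha> + 2" lam]] assms
    by (intro continuous_intros) auto
qed (use assms in \<open>simp_all add: reduced_kernel_def ml_e_0\<close>)

lemma continuous_on_reduced_forcing:
  assumes "0 < \<alpha>" "\<alpha> < 1"
  shows "continuous_on {0..T} (reduced_forcing \<alpha> c d lam u0 u1)"
  unfolding reduced_forcing_def[abs_def]
  using continuous_on_subset[OF continuous_on_ml_e[of \<alpha> "\<alpha> + 1" lam]]
        continuous_on_subset[OF continuous_on_ml_e[of \<alpha> "\<alpha> + 2" lam]] assms
  by (intro continuous_intros) auto

text \<open>Two integrations by parts in the memory term, followed by the Taylor formula for \<open>u\<close>.\<close>
lemma (in C2_on) memory_term_reduction: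
  assumes "0 < \<alpha>" "\<alpha> < 1" and t: "t \<in> {0<..T}"
  shows "d * integral {0..t} (\<lambda>s. ml_e \<alpha> \<alpha> lam (t - s) * u s) - c * u t
         = integral {0..t} (\<lambda>s. reduced_kernel \<alpha> c d lam (t - s) * ddu s)
           + reduced_forcing \<alpha> c d lam (u 0) (du 0) t"
proof -
  let ?e1 = "ml_e \<alpha> (\<alpha> + 1) lam" and ?e2 = "ml_e \<alpha> (\<alpha> + 2) lam"
  let ?I = "integral {0..t} (\<lambda>s. ?e2 (t - s) * ddu s)"
  have cont: "continuous_on {0..t} ?e1" "continuous_on {0..t} ?e2"
    using continuous_on_subset[OF continuous_on_ml_e[of \<alpha> _ lam]] assms by auto
  have "(?e1 has_real_derivative ml_e \<alpha> \<alpha> lam r) (at r)"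
       "(?e2 has_real_derivative ?e1 r) (at r)" if "r \<in> {0<..<t}" for r
    using has_real_derivative_ml_e[of \<alpha> "\<alpha> + 1" r lam] has_real_derivative_ml_e[of \<alpha> "\<alpha> + 2" r lam]
          that assms by (simp_all add: algebra_simps)
  hence "integral {0..t} (\<lambda>s. ml_e \<alpha> \<alpha> lam (t - s) * u s) = u 0 * ?e1 t + du 0 * ?e2 t + ?I"
    using t cont assms by (intro integral_unique convolution_by_parts) (simp_all add: ml_e_0)
  moreover have "integral {0..t} (\<lambda>s. reduced_kernel \<alpha> c d lam (t - s) * ddu s)
                 = d * ?I - c * (u t - u 0 - du 0 * t)"
  proof (intro integral_unique)
    have "(\<lambda>s. ?e2 (t - s) * ddu s) integrable_on {0..t}"
      using cont(2) t by (intro integrable_convolution_ddu) auto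
    hence "((\<lambda>s. d * (?e2 (t - s) * ddu s) - c * ((t - s) * ddu s)) has_integral
             d * ?I - c * (u t - u 0 - du 0 * t)) {0..t}"
      using t by (intro has_integral_diff has_integral_mult_right taylor_integral_remainder)
                 (simp_all add: integrable_integral)
    thus "((\<lambda>s. reduced_kernel \<alpha> c d lam (t - s) * ddu s) has_integral
             d * ?I - c * (u t - u 0 - du 0 * t)) {0..t}"
      by (simp add: reduced_kernel_def algebra_simps)
  qed
  ultimately show ?thesis
    by (simp add: reduced_forcing_def algebra_simps)
qed

lemma is_solution_with_iff:
  "is_solution_with T \<alpha> c d lam u0 u1 u du ddu \<longleftrightarrow>
     C2_on T u du ddu \<and>
     (\<forall>t\<in>{0<..T}. ddu t + c * u t = d * integral {0..t} (\<lambda>s. ml_e \<alpha> \<alpha> lam (t - s) * u s)) \<and>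
     u 0 = u0 \<and> du 0 = u1"
  unfolding is_solution_with_def C2_on_def by auto

lemma solution_second_derivative_eq:
  assumes "0 < \<alpha>" "\<alpha> < 1" and sol: "is_solution_with T \<alpha> c d lam u0 u1 u du ddu"
    and t: "t \<in> {0<..T}"
  shows "ddu t = integral {0..t} (\<lambda>s. reduced_kernel \<alpha> c d lam (t - s) * ddu s)
                 + reduced_forcing \<alpha> c d lam u0 u1 t"
proof -
  interpret C2_on T u du ddu
    using sol unfolding is_solution_with_iff by (rule conjunct1)
  have "ddu t = d * integral {0..t} (\<lambda>s. ml_e \<alpha> \<alpha> lam (t - s) * u s) - c * u t"
    using sol t by (simp add: is_solution_with_iff algebra_simps)
  thus ?thesis
    using memory_term_reduction[OF assms(1,2) t, where c = c and d = d and lam = lam] sol by (simp add: is_solution_with_iff)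
qed

lemma solution_volterra_eq:
  assumes "0 < T" "0 < \<alpha>" "\<alpha> < 1" and sol: "is_solution_with T \<alpha> c d lam u0 u1 u du ddu"
    and s: "s \<in> {0..T}"
  shows "ddu s = integral {0..s} (\<lambda>r. reduced_kernel \<alpha> c d lam (s - r) * ddu r)
                 + reduced_forcing \<alpha> c d lam u0 u1 s"
proof -
  interpret volterra T "reduced_kernel \<alpha> c d lam"
    using assms by (intro volterra_reduced_kernel)
  have "continuous_on {0..T} ddu"
    using sol by (simp add: is_solution_with_def)
  from volterra_eq_at_0[OF this continuous_on_reduced_forcing[OF assms(2,3)] _ s]
  show ?thesis
    using solution_second_derivative_eq[OF assms(2,3) sol] by (simp add: volterra_op_def)
qed

lemma solution_exists:
  assumes "0 < T" "0 < \<alpha>" "\<alpha> < 1"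
  shows "\<exists>u. is_solution T \<alpha> c d lam u0 u1 u"
proof -
  interpret volterra T "reduced_kernel \<alpha> c d lam"
    using assms by (intro volterra_reduced_kernel)
  obtain z where z: "continuous_on {0..T} z"
    "\<And>t. t \<in> {0..T} \<Longrightarrow> z t = volterra_op z t + reduced_forcing \<alpha> c d lam u0 u1 t"
    using volterra_eq_exists[OF continuous_on_reduced_forcing[OF assms(2,3)]] by metis
  define du where "du t = u1 + integral {0..t} z" for t
  define u where "u t = u0 + integral {0..t} du" for t
  interpret C2_on T u du z
    unfolding u_def du_def by (rule C2_on_integral_integral[OF z(1)])
  have initial: "u 0 = u0" "du 0 = u1"
    by (simp_all add: u_def du_def)
  have "z t + c * u t = d * integral {0..t} (\<lambda>s. ml_e \<alpha> \<alpha> lam (t - s) * u s)"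
    if "t \<in> {0<..T}" for t
    using memory_term_reduction[OF assms(2,3) that, where c = c and d = d and lam = lam] z(2)[of t] that
    by (simp add: volterra_op_def initial algebra_simps)
  hence "is_solution_with T \<alpha> c d lam u0 u1 u du z"
    unfolding is_solution_with_iff using C2_on_axioms initial by simp
  thus ?thesis
    unfolding is_solution_def by auto
qed

lemma solution_unique:
  assumes "0 < T" "0 < \<alpha>" "\<alpha> < 1"
    and u: "is_solution T \<alpha> c d lam u0 u1 u" and v: "is_solution T \<alpha> c d lam u0 u1 v"
    and t: "t \<in> {0..T}"
  shows "u t = v t"
proof -
  interpret volterra T "reduced_kernel \<alpha> c d lam"
    using assms by (intro volterra_reduced_kernel)
  obtain du ddu where u': "is_solution_with T \<alpha> c d lam u0 u1 u du ddu"
    using u unfolding is_solution_def by auto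
  obtain dv ddv where v': "is_solution_with T \<alpha> c d lam u0 u1 v dv ddv"
    using v unfolding is_solution_def by auto
  interpret U: C2_on T u du ddu
    using u' unfolding is_solution_with_iff by (rule conjunct1)
  interpret V: C2_on T v dv ddv
    using v' unfolding is_solution_with_iff by (rule conjunct1)
  have "ddu s = ddv s" if "s \<in> {0..T}" for s
    using volterra_eq_unique[OF U.continuous_ddu V.continuous_ddu _ _ that]
      solution_volterra_eq[OF assms(1-3) u'] solution_volterra_eq[OF assms(1-3) v']
    by (simp add: volterra_op_def)
  hence "integral {0..t} (\<lambda>s. (t - s) * ddu s) = integral {0..t} (\<lambda>s. (t - s) * ddv s)"
    using t by (intro integral_cong) auto
  thus ?thesis
    using integral_unique[OF U.taylor_integral_remainder[OF t]] integral_unique[OF V.taylor_integral_remainder[OF t]]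
      u' v' by (simp add: is_solution_with_iff)
qed

theorem lemma3p1:
  fixes T \<alpha> c d lam u0 u1 :: real
  assumes "T > 0" and "0 < \<alpha>" and "\<alpha> < 1" and "c > 0" and "d > 0" and "lam > 0"
  shows "(\<forall>u du ddu. is_solution_with T \<alpha> c d lam u0 u1 u du ddu \<longrightarrow>
            (\<forall>t\<in>{0<..T}. ddu t =
               integral {0..t} (\<lambda>s. (d * ml_e \<alpha> (\<alpha> + 2) lam (t - s) - c * (t - s)) * ddu s)
               + (d * u0 * ml_e \<alpha> (\<alpha> + 1) lam t + d * u1 * ml_e \<alpha> (\<alpha> + 2) lam t
                  - c * u1 * t - c * u0)))
         \<and> (\<exists>u. is_solution T \<alpha> c d lam u0 u1 u)
         \<and> (\<forall>u v. is_solution T \<alpha> c d lam u0 u1 u \<longrightarrow> is_solution T \<alpha> c d lam u0 u1 v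
                \<longrightarrow> (\<forall>t\<in>{0..T}. u t = v t))"
proof (intro conjI allI impI ballI)
  fix u du ddu t
  assume "is_solution_with T \<alpha> c d lam u0 u1 u du ddu" "t \<in> {0<..T}"
  from solution_second_derivative_eq[OF assms(2,3) this]
  show "ddu t = integral {0..t} (\<lambda>s. (d * ml_e \<alpha> (\<alpha> + 2) lam (t - s) - c * (t - s)) * ddu s)
                 + (d * u0 * ml_e \<alpha> (\<alpha> + 1) lam t + d * u1 * ml_e \<alpha> (\<alpha> + 2) lam t
                    - c * u1 * t - c * u0)"
    unfolding reduced_kernel_def reduced_forcing_def .
next
  show "\<exists>u. is_solution T \<alpha> c d lam u0 u1 u"
    by (rule solution_exists[OF assms(1-3)])
next
  fix u v t
  assume "is_solution T \<alpha> c d lam u0 u1 u" "is_solution T \<alpha> c d lam u0 u1 v" "t \<in> {0..T}"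
  thus "u t = v t"
    by (rule solution_unique[OF assms(1-3)])
qed

end
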